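(* Each of the sets $A$, $\wp_{fs}(A)$, $\wp_{fin}(A)$, $\wp_{cofin}(A)$, $T_{fin}(A)$, $A^A_{fs}$ and $\wp_{fin}(\wp_{fs}(A))$ is infinite but not FSM Dedekind infinite; moreover no finitely supported subset of any of these sets is FSM Dedekind infinite.
   Context: Framework (FSM). Work in ZF with a fixed infinite set $A$ of atoms; $S_A$ is the group of bijections of $A$ fixing all but finitely many atoms, acting on $A$ by evaluation; $Fix(S)$ is the set of $\pi\in S_A$ fixing each element of $S\subseteq A$; $S$ supports $x$ if $\pi\cdot x=x$ for all $\pi\in Fix(S)$. Subsets carry $\pi\star Z=\{\pi\cdot z:z\in Z\}$. $\wp_{fs}(A)$: finitely supported subsets of $A$; $\wp_{fin}(\cdot)$: finite subsets; $\wp_{cofin}(A)$: cofinite subsets of $A$. $T_{fin}(A)$: finite injective tuples of atoms (including the empty tuple) with componentwise action. $A^A_{fs}$: finitely supported functions $A\to A$, with action $(\pi\cdot f)(a)=\pi(f(\pi^{-1}(a)))$; a function is finitely supported if there is a finite $S$ with $f(\pi\cdot x)=\pi\cdot f(x)$ for all $\pi\in Fix(S)$. "Infinite" means not in bijection with any natural number. A set $X$ is FSM Dedekind infinite if there is a finitely supported injection from $X$ onto a finitely supported proper subset of $X$. *)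

theory Defs
  imports Main
begin

text \<open>Finitely supported mathematics. Atoms are the elements of a type 'a
(assumed infinite in the theorem); the set of atoms A is UNIV.\<close>

definition fperm :: "('a \<Rightarrow> 'a) \<Rightarrow> bool" where
  "fperm \<pi> \<longleftrightarrow> bij \<pi> \<and> finite {a. \<pi> a \<noteq> a}"

definition Fix :: "'a set \<Rightarrow> ('a \<Rightarrow> 'a) set" where
  "Fix S = {\<pi>. fperm \<pi> \<and> (\<forall>a\<in>S. \<pi> a = a)}"

definition supports :: "(('a \<Rightarrow> 'a) \<Rightarrow> 'b \<Rightarrow> 'b) \<Rightarrow> 'a set \<Rightarrow> 'b \<Rightarrow> bool" where
  "supports act S x \<longleftrightarrow> (\<forall>\<pi>\<in>Fix S. act \<pi> x = x)"

definition fin_supp :: "(('a \<Rightarrow> 'a) \<Rightarrow> 'b \<Rightarrow> 'b) \<Rightarrow> 'b \<Rightarrow> bool" where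
  "fin_supp act x \<longleftrightarrow> (\<exists>S. finite S \<and> supports act S x)"

definition atom_act :: "('a \<Rightarrow> 'a) \<Rightarrow> 'a \<Rightarrow> 'a" where
  "atom_act \<pi> a = \<pi> a"

definition set_act :: "(('a \<Rightarrow> 'a) \<Rightarrow> 'b \<Rightarrow> 'b) \<Rightarrow> ('a \<Rightarrow> 'a) \<Rightarrow> 'b set \<Rightarrow> 'b set" where
  "set_act act \<pi> Z = act \<pi> ` Z"

definition pair_act :: "(('a \<Rightarrow> 'a) \<Rightarrow> 'b \<Rightarrow> 'b) \<Rightarrow> (('a \<Rightarrow> 'a) \<Rightarrow> 'c \<Rightarrow> 'c)
    \<Rightarrow> ('a \<Rightarrow> 'a) \<Rightarrow> 'b \<times> 'c \<Rightarrow> 'b \<times> 'c" where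
  "pair_act act1 act2 \<pi> p = (act1 \<pi> (fst p), act2 \<pi> (snd p))"

definition tuple_act :: "('a \<Rightarrow> 'a) \<Rightarrow> 'a list \<Rightarrow> 'a list" where
  "tuple_act \<pi> xs = map \<pi> xs"

definition fun_act :: "('a \<Rightarrow> 'a) \<Rightarrow> ('a \<Rightarrow> 'a) \<Rightarrow> ('a \<Rightarrow> 'a)" where
  "fun_act \<pi> f = (\<lambda>a. \<pi> (f (inv \<pi> a)))"

definition fs_set :: "(('a \<Rightarrow> 'a) \<Rightarrow> 'b \<Rightarrow> 'b) \<Rightarrow> 'b set \<Rightarrow> bool" where
  "fs_set act X \<longleftrightarrow> fin_supp (set_act act) X"

definition graph_on :: "('b \<Rightarrow> 'c) \<Rightarrow> 'b set \<Rightarrow> ('b \<times> 'c) set" where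
  "graph_on f X = {(x, f x) | x. x \<in> X}"

definition fs_fun :: "(('a \<Rightarrow> 'a) \<Rightarrow> 'b \<Rightarrow> 'b) \<Rightarrow> (('a \<Rightarrow> 'a) \<Rightarrow> 'c \<Rightarrow> 'c)
    \<Rightarrow> 'b set \<Rightarrow> ('b \<Rightarrow> 'c) \<Rightarrow> bool" where
  "fs_fun act1 act2 X f \<longleftrightarrow> fin_supp (set_act (pair_act act1 act2)) (graph_on f X)"

definition FSM_Dedekind_infinite :: "(('a \<Rightarrow> 'a) \<Rightarrow> 'b \<Rightarrow> 'b) \<Rightarrow> 'b set \<Rightarrow> bool" where
  "FSM_Dedekind_infinite act X \<longleftrightarrow>
     (\<exists>f Y. fs_set act Y \<and> Y \<subset> X \<and> fs_fun act act X f \<and> inj_on f X \<and> f ` X = Y)"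

definition FSM_inf_not_DI :: "(('a \<Rightarrow> 'a) \<Rightarrow> 'b \<Rightarrow> 'b) \<Rightarrow> 'b set \<Rightarrow> bool" where
  "FSM_inf_not_DI act X \<longleftrightarrow> infinite X \<and> \<not> FSM_Dedekind_infinite act X \<and>
     (\<forall>Y. Y \<subseteq> X \<and> fs_set act Y \<longrightarrow> \<not> FSM_Dedekind_infinite act Y)"

definition Pfs :: "'a set set" where
  "Pfs = {Z. fs_set atom_act Z}"

definition Pfin :: "'a set set" where
  "Pfin = {Z. finite Z}"

definition Pcofin :: "'a set set" where
  "Pcofin = {Z. finite (- Z)}"

definition Tfin :: "'a list set" where
  "Tfin = {xs. distinct xs}"

definition AA_fs :: "('a \<Rightarrow> 'a) set" where
  "AA_fs = {f. \<exists>S. finite S \<and> (\<forall>\<pi>\<in>Fix S. \<forall>x. f (\<pi> x) = \<pi> (f x))}"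

definition Pfin_Pfs :: "'a set set set" where
  "Pfin_Pfs = {F. finite F \<and> F \<subseteq> Pfs}"

end

theory Submission
  imports Defs "HOL-Combinatorics.Transposition" "HOL-Library.FuncSet"
begin

text \<open>If f is a finitely supported injection of Y onto a proper subset and y is not in its range,
  the orbit y, f y, f (f y), ... is injective and all its members are supported by one finite set,
  a support of f together with one of y. So Y is not FSM Dedekind infinite as soon as each finite
  set of atoms supports only finitely many elements of Y. For the seven sets this follows by
  swapping an atom outside the support T with a fresh atom: T-supported atoms lie in T,
  T-supported subsets of atoms are subsets of T or complements of such, T-supported tuples only
  contain atoms of T, a T-supported function is determined by its values on T and on one further
  atom, and the members of a T-supported finite family of finitely supported subsets are again
  subsets of T or complements of such.\<close>

lemma Fix_antimono: "T \<subseteq> T' \<Longrightarrow> Fix T' \<subseteq> Fix T"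
  by (auto simp: Fix_def)

lemma supports_mono: "supports act T x \<Longrightarrow> T \<subseteq> T' \<Longrightarrow> supports act T' x"
  unfolding supports_def using Fix_antimono by blast

lemma bij_if_in_Fix: "\<pi> \<in> Fix T \<Longrightarrow> bij \<pi>"
  by (simp add: Fix_def fperm_def)

lemma transpose_in_Fix:
  assumes "a \<notin> T" "b \<notin> T"
  shows "Transposition.transpose a b \<in> Fix T"
proof -
  have "{x. Transposition.transpose a b x \<noteq> x} \<subseteq> {a, b}"
    by (auto simp: transpose_def)
  then have "finite {x. Transposition.transpose a b x \<noteq> x}"
    by (rule finite_subset) simp
  then show ?thesis
    using assms by (auto simp: Fix_def fperm_def transpose_def)
qed

lemma atom_act_eq [simp]: "atom_act \<pi> = \<pi>"
  by (rule ext) (simp add: atom_act_def)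

lemma set_act_atom_act [simp]: "set_act atom_act \<pi> Z = \<pi> ` Z"
  by (simp add: set_act_def)

definition no_infinite_uniformly_supported :: "(('a \<Rightarrow> 'a) \<Rightarrow> 'b \<Rightarrow> 'b) \<Rightarrow> 'b set \<Rightarrow> bool" where
  "no_infinite_uniformly_supported act X \<longleftrightarrow> (\<forall>T. finite T \<longrightarrow> finite {x \<in> X. supports act T x})"

lemma no_infinite_uniformly_supported_subset:
  assumes "no_infinite_uniformly_supported act X" "Y \<subseteq> X"
  shows "no_infinite_uniformly_supported act Y"
  unfolding no_infinite_uniformly_supported_def
proof (intro allI impI)
  fix T :: "'a set"
  assume "finite T"
  then have "finite {x \<in> X. supports act T x}"
    using assms(1) by (simp add: no_infinite_uniformly_supported_def)
  then show "finite {y \<in> Y. supports act T y}"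
    by (rule finite_subset[rotated]) (use assms(2) in blast)
qed

lemma funpow_in_if_image_subset: "f ` Y \<subseteq> Y \<Longrightarrow> y \<in> Y \<Longrightarrow> (f ^^ n) y \<in> Y"
  by (induction n) auto

lemma inj_funpow_if_notin_image:
  assumes inj: "inj_on f Y" and "f ` Y \<subseteq> Y" "y \<in> Y" "y \<notin> f ` Y"
  shows "inj (\<lambda>n. (f ^^ n) y)"
proof (rule injI)
  have orbit: "(f ^^ n) y \<in> Y" for n
    using assms(2,3) by (rule funpow_in_if_image_subset)
  show "(f ^^ m) y = (f ^^ n) y \<Longrightarrow> m = n" for m n
  proof (induction m arbitrary: n)
    case 0
    then show ?case
      using assms(4) orbit by (cases n) (auto intro: image_eqI)
  next
    case (Suc m)
    then show ?case
      using assms(4) orbit inj_onD[OF inj] by (cases n) (auto intro: image_eqI[OF sym])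
  qed
qed

lemma graph_on_supported_equivariant:
  assumes "supports (set_act (pair_act act act')) S (graph_on f X)" "\<pi> \<in> Fix S" "x \<in> X"
  shows "f (act \<pi> x) = act' \<pi> (f x)"
proof -
  have "pair_act act act' \<pi> (x, f x) \<in> set_act (pair_act act act') \<pi> (graph_on f X)"
    using assms(3) by (auto simp: set_act_def graph_on_def)
  then have "(act \<pi> x, act' \<pi> (f x)) \<in> graph_on f X"
    using assms(1,2) by (simp add: supports_def pair_act_def)
  then show ?thesis
    by (auto simp: graph_on_def)
qed

lemma supports_funpow_if_graph_on_supported:
  assumes S: "supports (set_act (pair_act act act)) S (graph_on f Y)" and "S \<subseteq> T"
    and "f ` Y \<subseteq> Y" "y \<in> Y" "supports act T y"
  shows "supports act T ((f ^^ n) y)"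
proof (induction n)
  case 0
  then show ?case using assms(5) by simp
next
  case (Suc n)
  have "act \<pi> (f ((f ^^ n) y)) = f ((f ^^ n) y)" if "\<pi> \<in> Fix T" for \<pi>
  proof -
    have "\<pi> \<in> Fix S" using that Fix_antimono[OF assms(2)] by blast
    moreover have "(f ^^ n) y \<in> Y" using assms(3,4) by (rule funpow_in_if_image_subset)
    ultimately show ?thesis
      using graph_on_supported_equivariant[OF S] Suc.IH that by (metis supports_def)
  qed
  then show ?case by (simp add: supports_def)
qed

lemma not_FSM_Dedekind_infinite:
  assumes fs: "\<forall>x\<in>Y. fin_supp act x" and fin: "no_infinite_uniformly_supported act Y"
  shows "\<not> FSM_Dedekind_infinite act Y"
proof
  assume "FSM_Dedekind_infinite act Y"
  then obtain f where inj: "inj_on f Y" and proper: "f ` Y \<subset> Y" and "fs_fun act act Y f"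
    unfolding FSM_Dedekind_infinite_def by blast
  then obtain S where "finite S" and S: "supports (set_act (pair_act act act)) S (graph_on f Y)"
    unfolding fs_fun_def fin_supp_def by blast
  obtain y where y: "y \<in> Y" "y \<notin> f ` Y"
    using proper by blast
  then obtain Ty where "finite Ty" and Ty: "supports act Ty y"
    using fs unfolding fin_supp_def by blast
  let ?T = "S \<union> Ty"
  have into: "f ` Y \<subseteq> Y"
    using proper by blast
  have "(f ^^ n) y \<in> Y" "supports act ?T ((f ^^ n) y)" for n
    using funpow_in_if_image_subset[OF into y(1)]
      supports_funpow_if_graph_on_supported[OF S _ into y(1) supports_mono[OF Ty]] by auto
  then have "range (\<lambda>n. (f ^^ n) y) \<subseteq> {x \<in> Y. supports act ?T x}"
    by blast
  moreover have "finite {x \<in> Y. supports act ?T x}"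
    using fin \<open>finite S\<close> \<open>finite Ty\<close> by (simp add: no_infinite_uniformly_supported_def)
  moreover have "inj (\<lambda>n. (f ^^ n) y)"
    using inj into y by (rule inj_funpow_if_notin_image)
  ultimately show False
    using inj_on_finite[of "\<lambda>n. (f ^^ n) y" UNIV] by simp
qed

lemma FSM_inf_not_DI_intro:
  assumes "infinite X" and fs: "\<forall>x\<in>X. fin_supp act x"
    and fin: "no_infinite_uniformly_supported act X"
  shows "FSM_inf_not_DI act X"
  unfolding FSM_inf_not_DI_def
proof (intro conjI allI impI)
  show "infinite X" by fact
  show "\<not> FSM_Dedekind_infinite act X"
    using fs fin by (rule not_FSM_Dedekind_infinite)
  fix Y
  assume "Y \<subseteq> X \<and> fs_set act Y"
  then have "Y \<subseteq> X" ..
  show "\<not> FSM_Dedekind_infinite act Y"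
    using fs \<open>Y \<subseteq> X\<close> no_infinite_uniformly_supported_subset[OF fin \<open>Y \<subseteq> X\<close>]
    by (intro not_FSM_Dedekind_infinite) auto
qed

lemma infinite_if_inj_into:
  assumes "infinite (UNIV :: 'a set)" "inj (f :: 'a \<Rightarrow> 'b)" "range f \<subseteq> X"
  shows "infinite X"
  using assms inj_on_finite by blast

lemma fresh_atom:
  assumes "infinite (UNIV :: 'a set)" "finite (T :: 'a set)"
  obtains b where "b \<notin> T"
  using ex_new_if_finite[OF assms] by blast

lemma supports_set_act_if_supports_members:
  "\<forall>x\<in>F. supports act T x \<Longrightarrow> supports (set_act act) T F"
  by (force simp: supports_def set_act_def)

lemma fin_supp_set_act_if_finite:
  assumes "finite F" "\<forall>x\<in>F. fin_supp act x"
  shows "fin_supp (set_act act) F"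
proof -
  obtain g where g: "\<forall>x\<in>F. finite (g x) \<and> supports act (g x) x"
    using assms(2) unfolding fin_supp_def by metis
  then have "\<forall>x\<in>F. supports act (\<Union> (g ` F)) x"
    by (blast intro: supports_mono)
  moreover have "finite (\<Union> (g ` F))"
    using assms(1) g by blast
  ultimately show ?thesis
    unfolding fin_supp_def by (blast intro: supports_set_act_if_supports_members)
qed

lemma fin_supp_atom: "fin_supp atom_act a"
  unfolding fin_supp_def supports_def by (rule exI[of _ "{a}"]) (auto simp: Fix_def)

lemma supports_atom_imp_mem:
  assumes "infinite (UNIV :: 'a set)" "finite T" "supports atom_act T (a :: 'a)"
  shows "a \<in> T"
proof (rule ccontr)
  assume "a \<notin> T"
  obtain b where b: "b \<notin> insert a T"
    using fresh_atom assms(1,2) by (metis finite_insert)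
  then have "Transposition.transpose a b \<in> Fix T"
    using \<open>a \<notin> T\<close> by (intro transpose_in_Fix) auto
  then have "Transposition.transpose a b a = a"
    using assms(3) unfolding supports_def atom_act_eq by blast
  then show False
    using b by simp
qed

lemma FSM_inf_not_DI_atoms:
  assumes "infinite (UNIV :: 'a set)"
  shows "FSM_inf_not_DI atom_act (UNIV :: 'a set)"
proof (rule FSM_inf_not_DI_intro)
  show "no_infinite_uniformly_supported atom_act (UNIV :: 'a set)"
    unfolding no_infinite_uniformly_supported_def
    using supports_atom_imp_mem[OF assms] by (blast intro: finite_subset)
qed (use assms fin_supp_atom in auto)

lemma supports_set_imp_subset_or_compl:
  assumes "supports (set_act atom_act) T Z"
  shows "Z \<subseteq> T \<or> - Z \<subseteq> T"
proof (rule ccontr)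
  assume "\<not> (Z \<subseteq> T \<or> - Z \<subseteq> T)"
  then obtain a b where ab: "a \<in> Z" "a \<notin> T" "b \<notin> Z" "b \<notin> T"
    by auto
  then have "Transposition.transpose a b ` Z = Z"
    using assms transpose_in_Fix[of a T b] by (simp add: supports_def)
  then show False
    using ab by (metis image_eqI transpose_apply_first)
qed

lemma finite_subsets_or_compl: "finite T \<Longrightarrow> finite {Z. Z \<subseteq> T \<or> - Z \<subseteq> T}"
proof -
  assume "finite T"
  have "{Z. Z \<subseteq> T \<or> - Z \<subseteq> T} \<subseteq> Pow T \<union> uminus ` Pow T"
    by (auto intro: image_eqI[where x = "- _"])
  then show ?thesis
    by (rule finite_subset) (simp add: \<open>finite T\<close>)
qed

lemma no_infinite_uniformly_supported_sets:
  "no_infinite_uniformly_supported (set_act atom_act) (X :: 'a set set)"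
  unfolding no_infinite_uniformly_supported_def
proof (intro allI impI)
  fix T :: "'a set"
  assume "finite T"
  have "{Z \<in> X. supports (set_act atom_act) T Z} \<subseteq> {Z. Z \<subseteq> T \<or> - Z \<subseteq> T}"
    using supports_set_imp_subset_or_compl by blast
  then show "finite {Z \<in> X. supports (set_act atom_act) T Z}"
    by (rule finite_subset) (rule finite_subsets_or_compl[OF \<open>finite T\<close>])
qed

lemma finite_in_Pfs: "finite Z \<Longrightarrow> Z \<in> Pfs"
  unfolding Pfs_def fs_set_def
  by (simp add: fin_supp_set_act_if_finite fin_supp_atom)

lemma cofinite_in_Pfs:
  assumes "finite (- Z)"
  shows "Z \<in> Pfs"
proof -
  have "\<pi> ` Z = Z" if "\<pi> \<in> Fix (- Z)" for \<pi>
  proof -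
    have "\<pi> ` (- Z) = - Z"
      using that by (auto simp: Fix_def intro: rev_image_eqI)
    then show ?thesis
      using bij_if_in_Fix[OF that] by (metis bij_image_Compl_eq double_complement)
  qed
  then show ?thesis
    using assms unfolding Pfs_def fs_set_def fin_supp_def supports_def by auto
qed

lemma FSM_inf_not_DI_if_subset_Pfs:
  assumes "infinite X" "X \<subseteq> Pfs"
  shows "FSM_inf_not_DI (set_act atom_act) X"
  using assms no_infinite_uniformly_supported_sets
  by (intro FSM_inf_not_DI_intro) (auto simp: Pfs_def fs_set_def)

lemma infinite_Pfin:
  assumes "infinite (UNIV :: 'a set)"
  shows "infinite (Pfin :: 'a set set)"
  using assms by (rule infinite_if_inj_into[of "\<lambda>a. {a}"]) (auto simp: Pfin_def)

lemma infinite_Pcofin: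
  assumes "infinite (UNIV :: 'a set)"
  shows "infinite (Pcofin :: 'a set set)"
  using assms by (rule infinite_if_inj_into[of "\<lambda>a. - {a}"]) (auto simp: Pcofin_def inj_def)

lemma supports_tuple_imp_set_subset:
  assumes "infinite (UNIV :: 'a set)" "finite T" "supports tuple_act T (xs :: 'a list)"
  shows "set xs \<subseteq> T"
proof
  fix a
  assume a: "a \<in> set xs"
  show "a \<in> T"
  proof (rule ccontr)
    assume "a \<notin> T"
    obtain b where b: "b \<notin> insert a (T \<union> set xs)"
      using fresh_atom assms(1,2) by (metis finite_Un finite_insert finite_set)
    then have "map (Transposition.transpose a b) xs = xs"
      using assms(3) transpose_in_Fix[of a T b] \<open>a \<notin> T\<close> by (simp add: supports_def tuple_act_def)
    then have "b \<in> set xs"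
      using a by (metis list.set_map image_eqI transpose_apply_first)
    then show False
      using b by simp
  qed
qed

lemma fin_supp_tuple: "fin_supp tuple_act xs"
  unfolding fin_supp_def supports_def tuple_act_def
  by (rule exI[of _ "set xs"]) (auto simp: Fix_def intro: map_idI)

lemma FSM_inf_not_DI_tuples:
  assumes "infinite (UNIV :: 'a set)"
  shows "FSM_inf_not_DI tuple_act (Tfin :: 'a list set)"
proof (rule FSM_inf_not_DI_intro)
  show "infinite (Tfin :: 'a list set)"
    using assms by (rule infinite_if_inj_into[of "\<lambda>a. [a]"]) (auto simp: Tfin_def inj_def)
  show "\<forall>xs\<in>Tfin. fin_supp tuple_act xs"
    using fin_supp_tuple by blast
  show "no_infinite_uniformly_supported tuple_act (Tfin :: 'a list set)"
    unfolding no_infinite_uniformly_supported_def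
  proof (intro allI impI)
    fix T :: "'a set"
    assume "finite T"
    have "set xs \<subseteq> T \<and> length xs \<le> card T" if "xs \<in> Tfin" "supports tuple_act T xs" for xs
    proof -
      have "set xs \<subseteq> T"
        using supports_tuple_imp_set_subset[OF assms \<open>finite T\<close> that(2)] .
      moreover have "length xs = card (set xs)"
        using that(1) by (simp add: Tfin_def distinct_card)
      ultimately show ?thesis
        using card_mono[OF \<open>finite T\<close>] by auto
    qed
    then have "{xs \<in> Tfin. supports tuple_act T xs} \<subseteq> {xs. set xs \<subseteq> T \<and> length xs \<le> card T}"
      by blast
    then show "finite {xs \<in> Tfin. supports tuple_act T xs}"
      by (rule finite_subset) (rule finite_lists_length_le[OF \<open>finite T\<close>])
  qed
qed

lemma supports_fun_act_commute:
  assumes "supports fun_act T f" "\<pi> \<in> Fix T"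
  shows "f (\<pi> x) = \<pi> (f x)"
proof -
  have "fun_act \<pi> f (\<pi> x) = f (\<pi> x)"
    using assms by (simp add: supports_def)
  then show ?thesis
    using bij_if_in_Fix[OF assms(2)] by (simp add: fun_act_def bij_is_inj)
qed

lemma supports_fun_act_value:
  assumes "infinite (UNIV :: 'a set)" "finite T" "supports fun_act T (f :: 'a \<Rightarrow> 'a)"
  shows "f x \<in> insert x T"
proof (rule ccontr)
  assume fx: "f x \<notin> insert x T"
  obtain b where b: "b \<notin> insert x (insert (f x) T)"
    using fresh_atom assms(1,2) by (metis finite_insert)
  have "Transposition.transpose (f x) b \<in> Fix T"
    using b fx by (intro transpose_in_Fix) auto
  then have "f (Transposition.transpose (f x) b x) = Transposition.transpose (f x) b (f x)"
    by (rule supports_fun_act_commute[OF assms(3)])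
  then have "f x = b"
    using b fx by (auto simp: transpose_def)
  then show False
    using b by simp
qed

lemma supports_fun_act_outside:
  assumes "infinite (UNIV :: 'a set)" "finite T" "supports fun_act T (f :: 'a \<Rightarrow> 'a)"
    and "x0 \<notin> T" "x \<notin> T"
  shows "f x = (if f x0 = x0 then x else f x0)"
proof -
  have "Transposition.transpose x0 x \<in> Fix T"
    using assms(4,5) by (rule transpose_in_Fix)
  then have "f x = Transposition.transpose x0 x (f x0)"
    using supports_fun_act_commute[OF assms(3)] transpose_apply_first by metis
  moreover have "f x0 = x0 \<or> f x0 \<in> T"
    using supports_fun_act_value[OF assms(1-3)] by blast
  ultimately show ?thesis
    using assms(4,5) by (auto simp: transpose_def)
qed

lemma no_infinite_uniformly_supported_functions:
  assumes "infinite (UNIV :: 'a set)"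
  shows "no_infinite_uniformly_supported fun_act (X :: ('a \<Rightarrow> 'a) set)"
  unfolding no_infinite_uniformly_supported_def
proof (intro allI impI)
  fix T :: "'a set"
  assume "finite T"
  obtain x0 where "x0 \<notin> T"
    using fresh_atom[OF assms \<open>finite T\<close>] .
  let ?I = "insert x0 T"
  let ?extend = "\<lambda>h x. if x \<in> ?I then h x else if h x0 = x0 then x else h x0"
  have "f \<in> ?extend ` (\<Pi>\<^sub>E x\<in>?I. ?I)" if "supports fun_act T f" for f
  proof
    show "f = ?extend (restrict f ?I)"
      using supports_fun_act_outside[OF assms \<open>finite T\<close> that \<open>x0 \<notin> T\<close>] by auto
    have "f x \<in> ?I" if "x \<in> ?I" for x
      using supports_fun_act_value[OF assms \<open>finite T\<close> \<open>supports fun_act T f\<close>, of x] that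
      by auto
    then show "restrict f ?I \<in> (\<Pi>\<^sub>E x\<in>?I. ?I)"
      by simp
  qed
  then have "{f \<in> X. supports fun_act T f} \<subseteq> ?extend ` (\<Pi>\<^sub>E x\<in>?I. ?I)"
    by blast
  moreover have "finite (\<Pi>\<^sub>E x\<in>?I. ?I)"
    using \<open>finite T\<close> by (simp add: finite_PiE)
  ultimately show "finite {f \<in> X. supports fun_act T f}"
    by (meson finite_imageI finite_subset)
qed

lemma fin_supp_if_AA_fs: "f \<in> AA_fs \<Longrightarrow> fin_supp fun_act f"
proof -
  assume "f \<in> AA_fs"
  then obtain S where "finite S" and S: "\<forall>\<pi>\<in>Fix S. \<forall>x. f (\<pi> x) = \<pi> (f x)"
    unfolding AA_fs_def by blast
  have "fun_act \<pi> f = f" if "\<pi> \<in> Fix S" for \<pi>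
  proof
    fix a
    have "\<pi> (f (inv \<pi> a)) = f (\<pi> (inv \<pi> a))"
      using S that by simp
    then show "fun_act \<pi> f a = f a"
      using bij_if_in_Fix[OF that] by (simp add: fun_act_def bij_is_surj surj_f_inv_f)
  qed
  then show ?thesis
    using \<open>finite S\<close> unfolding fin_supp_def supports_def by blast
qed

lemma FSM_inf_not_DI_functions:
  assumes "infinite (UNIV :: 'a set)"
  shows "FSM_inf_not_DI fun_act (AA_fs :: ('a \<Rightarrow> 'a) set)"
proof (rule FSM_inf_not_DI_intro)
  have "(\<lambda>_. a) \<in> AA_fs" for a :: 'a
    unfolding AA_fs_def by (auto simp: Fix_def intro!: exI[of _ "{a}"])
  then show "infinite (AA_fs :: ('a \<Rightarrow> 'a) set)"
    using assms by (intro infinite_if_inj_into[of "\<lambda>a _. a"]) (auto simp: inj_def fun_eq_iff)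
qed (use assms fin_supp_if_AA_fs no_infinite_uniformly_supported_functions in auto)

definition small_side :: "'a set \<Rightarrow> 'a set" where
  "small_side Z = (if finite Z then Z else - Z)"

lemma small_side_image: "bij \<pi> \<Longrightarrow> small_side (\<pi> ` Z) = \<pi> ` small_side Z"
  using finite_image_iff[OF inj_on_subset[OF bij_is_inj subset_UNIV], of \<pi> Z]
  by (simp add: small_side_def bij_image_Compl_eq)

lemma finite_small_side_if_Pfs:
  assumes "Z \<in> Pfs"
  shows "finite (small_side Z)"
proof -
  obtain S where "finite S" "supports (set_act atom_act) S Z"
    using assms unfolding Pfs_def fs_set_def fin_supp_def by blast
  then show ?thesis
    using supports_set_imp_subset_or_compl
    by (metis finite_subset small_side_def)
qed

text \<open>If some atom a of small_side Z lies outside T, swap it with an atom b outside T and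
  outside every small_side of F: the swapped Z is again in F, but its small side contains b.\<close>

lemma supports_family_imp_small_side_subset:
  assumes inf: "infinite (UNIV :: 'a set)" and "finite T" "F \<in> Pfin_Pfs"
    and F: "supports (set_act (set_act atom_act)) T F" and "Z \<in> F"
  shows "small_side Z \<subseteq> (T :: 'a set)"
proof
  fix a
  assume a: "a \<in> small_side Z"
  show "a \<in> T"
  proof (rule ccontr)
    assume "a \<notin> T"
    let ?U = "\<Union> (small_side ` F)"
    have "finite ?U"
      using \<open>F \<in> Pfin_Pfs\<close> finite_small_side_if_Pfs by (auto simp: Pfin_Pfs_def)
    then obtain b where b: "b \<notin> insert a (T \<union> ?U)"
      using fresh_atom[OF inf] \<open>finite T\<close> by (metis finite_UnI finite_insert)
    let ?\<pi> = "Transposition.transpose a b"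
    have "?\<pi> \<in> Fix T"
      using b \<open>a \<notin> T\<close> by (intro transpose_in_Fix) auto
    then have "?\<pi> ` Z \<in> F"
      using F \<open>Z \<in> F\<close> unfolding supports_def set_act_def by force
    moreover have "b \<in> small_side (?\<pi> ` Z)"
      using a by (simp add: small_side_image) (metis image_eqI transpose_apply_first)
    ultimately show False
      using b by blast
  qed
qed

lemma FSM_inf_not_DI_Pfin_Pfs:
  assumes inf: "infinite (UNIV :: 'a set)"
  shows "FSM_inf_not_DI (set_act (set_act atom_act)) (Pfin_Pfs :: 'a set set set)"
proof (rule FSM_inf_not_DI_intro)
  show "infinite (Pfin_Pfs :: 'a set set set)"
    using inf by (rule infinite_if_inj_into[of "\<lambda>a. {{a}}"])
      (auto simp: inj_def Pfin_Pfs_def finite_in_Pfs)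
  show "\<forall>F\<in>Pfin_Pfs. fin_supp (set_act (set_act atom_act)) F"
    by (auto simp: Pfin_Pfs_def Pfs_def fs_set_def intro: fin_supp_set_act_if_finite)
  show "no_infinite_uniformly_supported (set_act (set_act atom_act)) (Pfin_Pfs :: 'a set set set)"
    unfolding no_infinite_uniformly_supported_def
  proof (intro allI impI)
    fix T :: "'a set"
    assume "finite T"
    have "{F \<in> Pfin_Pfs. supports (set_act (set_act atom_act)) T F} \<subseteq> Pow {Z. Z \<subseteq> T \<or> - Z \<subseteq> T}"
      using supports_family_imp_small_side_subset[OF inf \<open>finite T\<close>]
      by (fastforce simp: small_side_def split: if_splits)
    moreover have "finite (Pow {Z. Z \<subseteq> T \<or> - Z \<subseteq> T})"
      using finite_subsets_or_compl[OF \<open>finite T\<close>] by simp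
    ultimately show "finite {F \<in> Pfin_Pfs. supports (set_act (set_act atom_act)) T F}"
      by (rule finite_subset)
  qed
qed

theorem mainTheorem11:
  assumes "infinite (UNIV :: 'a set)"
  shows "FSM_inf_not_DI atom_act (UNIV :: 'a set)
       \<and> FSM_inf_not_DI (set_act atom_act) (Pfs :: 'a set set)
       \<and> FSM_inf_not_DI (set_act atom_act) (Pfin :: 'a set set)
       \<and> FSM_inf_not_DI (set_act atom_act) (Pcofin :: 'a set set)
       \<and> FSM_inf_not_DI tuple_act (Tfin :: 'a list set)
       \<and> FSM_inf_not_DI fun_act (AA_fs :: ('a \<Rightarrow> 'a) set)
       \<and> FSM_inf_not_DI (set_act (set_act atom_act)) (Pfin_Pfs :: 'a set set set)"
proof -
  have "(Pfin :: 'a set set) \<subseteq> Pfs" "(Pcofin :: 'a set set) \<subseteq> Pfs"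
    using finite_in_Pfs cofinite_in_Pfs by (auto simp: Pfin_def Pcofin_def)
  moreover have "infinite (Pfs :: 'a set set)"
    using \<open>Pfin \<subseteq> Pfs\<close> infinite_Pfin[OF assms] by (rule infinite_super)
  ultimately show ?thesis
    using FSM_inf_not_DI_atoms FSM_inf_not_DI_tuples FSM_inf_not_DI_functions
      FSM_inf_not_DI_Pfin_Pfs FSM_inf_not_DI_if_subset_Pfs infinite_Pfin infinite_Pcofin assms
    by auto
qed

end
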